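(* Let $m\in\mathbb{N}$, $m\geq2$, and $T:[0,1)\to[0,1)$, $T(x)=mx\bmod 1$. Let $0\le a<b\le 1$ so that $(a,b)\subset[0,1)$ is a nonempty open interval (the hole), and let $$A=\{x\in[0,1): T^n(x)\notin(a,b)\text{ for all }n\geq 0\}$$ be the survival set. Then for every $t\in(0,1)$ that has a universal $m$-adic expansion, $$A-t\subset\mathbb{Q}^c,\qquad A+t\subset\mathbb{Q}^c,\qquad \frac{A}{t}\subset\mathbb{Q}^c.$$ Moreover, if $t\in(1,\infty)$ and $1/t$ has a universal $m$-adic expansion, then $tA\subset\mathbb{Q}^c$.
   Context: An $m$-adic expansion of $t\in(0,1)$ is a sequence $(t_k)\in\{0,1,\dots,m-1\}^{\mathbb{N}}$ with $t=\sum_{k\geq1}t_k m^{-k}$. Such an expansion is universal if for every $k\geq1$ and every word $x_1\cdots x_k\in\{0,\dots,m-1\}^k$ there is $k_0\in\mathbb{N}$ with $t_{k_0+1}\cdots t_{k_0+k}=x_1\cdots x_k$; $t$ has a universal $m$-adic expansion if some $m$-adic expansion of it is universal. Notation: $A\pm t=\{x\pm t:x\in A\}$, $tA=\{tx:x\in A\setminus\{0\}\}$, $\frac{A}{t}=\{t^{-1}x:x\in A\setminus\{0\}\}$. $\mathbb{Q}^c$ denotes the set of irrational real numbers. *)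

theory Defs
  imports "HOL-Analysis.Analysis"
begin

definition times_m_mod1 :: "nat \<Rightarrow> real \<Rightarrow> real" where
  "times_m_mod1 m x = frac (real m * x)"

definition survivor_set :: "nat \<Rightarrow> real \<Rightarrow> real \<Rightarrow> real set" where
  "survivor_set m a b = {x \<in> {0..<1}. \<forall>n. (times_m_mod1 m ^^ n) x \<notin> {a<..<b}}"

text \<open>An m-adic expansion of t: digits d 0, d 1, ... (d k is the paper's t_(k+1)).\<close>
definition is_m_adic_expansion :: "nat \<Rightarrow> (nat \<Rightarrow> nat) \<Rightarrow> real \<Rightarrow> bool" where
  "is_m_adic_expansion m d t \<longleftrightarrow>
     (\<forall>k. d k < m) \<and> (\<lambda>k. real (d k) / real m ^ (Suc k)) sums t"

definition universal_expansion :: "nat \<Rightarrow> (nat \<Rightarrow> nat) \<Rightarrow> bool" where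
  "universal_expansion m d \<longleftrightarrow>
     (\<forall>w. w \<noteq> [] \<and> set w \<subseteq> {..<m} \<longrightarrow>
        (\<exists>k0. \<forall>i<length w. d (k0 + i) = w ! i))"

definition has_universal_expansion :: "nat \<Rightarrow> real \<Rightarrow> bool" where
  "has_universal_expansion m t \<longleftrightarrow>
     (\<exists>d. is_m_adic_expansion m d t \<and> universal_expansion m d)"

end

(*
  Write a point r t + q with r, q rational and r \<noteq> 0 as (p t + c) / L with integers p, c, L.
  If t has digits d 0, d 1, ..., then m^n (p t + c) / L = (S + p \<tau>) / L, where \<tau> \<in> [0, 1] is
  the value of the digits of t from position n on and S is an integer which, modulo L, is a
  finite state updated by reading digits. From any state, a suitable finite digit word pins
  \<tau> to a cylinder so small that the point lands in the hole whatever digits follow.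
  Concatenating such words for all L states gives a single word that works from every state,
  and a universal expansion of t contains it. So r t + q never survives; the four inclusions
  are instances with r = 1, r = -1, and q = 0 (using t, resp. 1 / t, as the expansion).
*)
theory Submission
  imports Defs
begin

definition word_value :: "nat \<Rightarrow> nat list \<Rightarrow> int" where
  "word_value m w = foldl (\<lambda>acc x. int m * acc + int x) 0 w"

lemma word_value_Nil [simp]: "word_value m [] = 0"
  by (simp add: word_value_def)

lemma word_value_snoc [simp]: "word_value m (w @ [x]) = int m * word_value m w + int x"
  by (simp add: word_value_def)

lemma word_value_append:
  "word_value m (w1 @ w2) = int m ^ length w2 * word_value m w1 + word_value m w2"
  by (induction w2 rule: rev_induct) (simp_all add: algebra_simps flip: append_assoc)

lemma word_value_exists:
  assumes "m > 0" and "M < m ^ n"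
  shows "\<exists>w. length w = n \<and> set w \<subseteq> {..<m} \<and> word_value m w = int M"
  using assms(2)
proof (induction n arbitrary: M)
  case 0
  then show ?case by simp
next
  case (Suc n)
  have "M div m < m ^ n"
    using Suc.prems assms(1) by (simp add: less_mult_imp_div_less mult.commute)
  then obtain w where w: "length w = n" "set w \<subseteq> {..<m}" "word_value m w = int (M div m)"
    using Suc.IH by blast
  have "int M = int m * int (M div m) + int (M mod m)"
    by (metis div_mult_mod_eq of_nat_add of_nat_mult mult.commute)
  with w assms(1) show ?case
    by (intro exI[of _ "w @ [M mod m]"]) auto
qed

definition cylinder :: "nat \<Rightarrow> nat list \<Rightarrow> real set" where
  "cylinder m w = {of_int (word_value m w) / real m ^ length w ..
                   (of_int (word_value m w) + 1) / real m ^ length w}"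

lemma cylinder_Nil [simp]: "cylinder m [] = {0..1}"
  by (simp add: cylinder_def)

lemma cylinder_append:
  assumes "m > 0" and "g \<in> cylinder m w2"
  shows "(of_int (word_value m w1) + g) / real m ^ length w1 \<in> cylinder m (w1 @ w2)"
proof -
  have pos: "real m ^ length w1 > 0" "real m ^ length w2 > 0" using assms(1) by simp_all
  have "of_int (word_value m (w1 @ w2)) / real m ^ length (w1 @ w2)
          = (of_int (word_value m w1) + of_int (word_value m w2) / real m ^ length w2) / real m ^ length w1"
    using pos by (simp add: word_value_append power_add field_simps)
  moreover have "(of_int (word_value m (w1 @ w2)) + 1) / real m ^ length (w1 @ w2)
          = (of_int (word_value m w1) + (of_int (word_value m w2) + 1) / real m ^ length w2) / real m ^ length w1"
    using pos by (simp add: word_value_append power_add field_simps)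
  ultimately show ?thesis
    using assms(2) pos unfolding cylinder_def by (auto simp: divide_right_mono)
qed

lemma cylinder_diameter:
  assumes "x \<in> cylinder m w" and "y \<in> cylinder m w"
  shows "\<bar>x - y\<bar> \<le> 1 / real m ^ length w"
proof -
  have "(of_int (word_value m w) + 1) / real m ^ length w
          = of_int (word_value m w) / real m ^ length w + 1 / real m ^ length w"
    by (simp add: add_divide_distrib)
  with assms show ?thesis unfolding cylinder_def by auto
qed

lemma cylinder_cover:
  assumes "m > 0" and "0 \<le> \<theta>" and "\<theta> < 1"
  shows "\<exists>w. length w = n \<and> set w \<subseteq> {..<m} \<and> \<theta> \<in> cylinder m w"
proof -
  have pos: "real m ^ n > 0" using assms(1) by simp
  define M where "M = nat \<lfloor>\<theta> * real m ^ n\<rfloor>"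
  have M: "real M \<le> \<theta> * real m ^ n" "\<theta> * real m ^ n < real M + 1"
    unfolding M_def using assms pos by (simp_all add: of_nat_nat)
  have "real M < real m ^ n"
    using M(1) mult_strict_right_mono[OF assms(3) pos] by linarith
  then have "M < m ^ n" by (metis of_nat_less_iff of_nat_power)
  then obtain w where w: "length w = n" "set w \<subseteq> {..<m}" "word_value m w = int M"
    using word_value_exists[OF assms(1)] by blast
  have "\<theta> \<in> cylinder m w"
    using M pos w unfolding cylinder_def by (simp add: field_simps)
  with w show ?thesis by blast
qed

definition expansion_tail :: "nat \<Rightarrow> (nat \<Rightarrow> nat) \<Rightarrow> real \<Rightarrow> nat \<Rightarrow> real" where
  "expansion_tail m d u n = real m ^ n * u - of_int (word_value m (map d [0..<n]))"

lemma expansion_tail_sums: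
  assumes "m > 0" and "is_m_adic_expansion m d u"
  shows "(\<lambda>k. real (d (n + k)) / real m ^ Suc k) sums expansion_tail m d u n"
proof (induction n)
  case 0
  then show ?case using assms(2) by (simp add: is_m_adic_expansion_def expansion_tail_def)
next
  case (Suc n)
  have "(\<lambda>k. real (d (n + Suc k)) / real m ^ Suc (Suc k))
          sums (expansion_tail m d u n - real (d n) / real m)"
    using Suc.IH sums_Suc_iff[where f = "\<lambda>k. real (d (n + k)) / real m ^ Suc k"] by simp
  then have "(\<lambda>k. real m * (real (d (n + Suc k)) / real m ^ Suc (Suc k)))
          sums (real m * (expansion_tail m d u n - real (d n) / real m))"
    by (rule sums_mult)
  moreover have "real m * (expansion_tail m d u n - real (d n) / real m) = expansion_tail m d u (Suc n)"
    using assms(1) by (simp add: expansion_tail_def algebra_simps)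
  moreover have "real m * (real (d (n + Suc k)) / real m ^ Suc (Suc k)) = real (d (Suc n + k)) / real m ^ Suc k" for k
    using assms(1) by simp
  ultimately show ?case
    by simp
qed

lemma expansion_tail_bounds:
  assumes "m \<ge> 2" and "is_m_adic_expansion m d u"
  shows "expansion_tail m d u n \<in> {0..1}"
proof -
  have m: "m > 0" "real m > 1" using assms(1) by simp_all
  have "(\<lambda>k. (real m - 1) / real m * (1 / real m) ^ k) sums ((real m - 1) / real m * (1 / (1 - 1 / real m)))"
    using m by (intro sums_mult geometric_sums) simp
  moreover have "(real m - 1) / real m * (1 / (1 - 1 / real m)) = 1"
    using m by (simp add: field_simps)
  ultimately have geometric: "(\<lambda>k. (real m - 1) / real m ^ Suc k) sums 1"
    using m by (simp add: power_divide)
  have "real (d k) \<le> real m - 1" for k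
  proof -
    have "d k + 1 \<le> m" using assms(2) by (simp add: is_m_adic_expansion_def Suc_le_eq)
    then show ?thesis by linarith
  qed
  then have "expansion_tail m d u n \<le> 1"
    by (intro sums_le[OF _ expansion_tail_sums[OF m(1) assms(2)] geometric] divide_right_mono) simp_all
  moreover have "0 \<le> expansion_tail m d u n"
    by (rule sums_le[OF _ sums_zero expansion_tail_sums[OF m(1) assms(2)]]) simp
  ultimately show ?thesis by simp
qed

lemma expansion_tail_in_cylinder:
  assumes "m \<ge> 2" and "is_m_adic_expansion m d u"
  shows "expansion_tail m d u n \<in> cylinder m (map d [n..<n + K])"
proof -
  have pos: "real m ^ K > 0" using assms(1) by simp
  have "word_value m (map d [0..<n + K]) = int m ^ K * word_value m (map d [0..<n]) + word_value m (map d [n..<n + K])"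
    using upt_add_eq_append[of 0 n K] by (simp add: word_value_append)
  then have "expansion_tail m d u n
      = (of_int (word_value m (map d [n..<n + K])) + expansion_tail m d u (n + K)) / real m ^ length (map d [n..<n + K])"
    using assms(1) by (simp add: expansion_tail_def power_add field_simps)
  also have "\<dots> \<in> cylinder m (map d [n..<n + K] @ [])"
    using assms(1) expansion_tail_bounds[OF assms] by (intro cylinder_append) simp_all
  finally show ?thesis by simp
qed

locale rational_hole_dynamics =
  fixes m :: nat and p L :: int and a b :: real
  assumes m_ge_2: "m \<ge> 2" and p_nonzero: "p \<noteq> 0" and L_pos: "L > 0"
    and hole: "0 \<le> a" "a < b" "b \<le> 1"
begin

text \<open>
  For x = (p t + c) / L, the number m^n x is (S + p g) / L with an integer state S and the
  tail g = expansion_tail m d t n; reading further digits w turns S into state_after S w.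
\<close>

definition state_after :: "int \<Rightarrow> nat list \<Rightarrow> int" where
  "state_after s w = int m ^ length w * s + p * word_value m w"

definition lands_in_hole :: "int \<Rightarrow> real \<Rightarrow> bool" where
  "lands_in_hole s g \<longleftrightarrow> frac ((of_int s + of_int p * g) / of_int L) \<in> {a<..<b}"

definition forces_hole :: "int \<Rightarrow> nat list \<Rightarrow> bool" where
  "forces_hole s w \<longleftrightarrow> (\<exists>w1 w2 w3. w = w1 @ w2 @ w3 \<and> (\<forall>g \<in> cylinder m w2. lands_in_hole (state_after s w1) g))"

lemma state_after_append: "state_after s (w1 @ w2) = state_after (state_after s w1) w2"
  by (simp add: state_after_def word_value_append algebra_simps power_add)

lemma state_after_add_multiple: "state_after (s + L * k) w = state_after s w + L * (int m ^ length w * k)"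
  by (simp add: state_after_def algebra_simps)

lemma lands_in_hole_add_multiple: "lands_in_hole (s + L * k) g \<longleftrightarrow> lands_in_hole s g"
proof -
  have "(of_int (s + L * k) + of_int p * g) / of_int L = (of_int s + of_int p * g) / of_int L + of_int k"
    using L_pos by (simp add: field_simps)
  then show ?thesis by (simp add: lands_in_hole_def)
qed

lemma forces_hole_mod: "forces_hole (s mod L) w \<Longrightarrow> forces_hole s w"
  using state_after_add_multiple[of "s mod L" "s div L"] lands_in_hole_add_multiple
  unfolding forces_hole_def by simp

lemma forces_hole_append: "forces_hole s w \<Longrightarrow> forces_hole s (w @ v)"
  unfolding forces_hole_def by (metis append_assoc)

lemma forces_hole_prepend: "forces_hole (state_after s w) v \<Longrightarrow> forces_hole s (w @ v)"
  unfolding forces_hole_def by (metis append_assoc state_after_append)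

lemma exists_centre_preimage:
  assumes "real_of_int L < real m ^ J"
  obtains \<theta> z where "0 \<le> \<theta>" "\<theta> < 1"
    "real m ^ J * (of_int s + of_int p * \<theta>) / of_int L = (a + b) / 2 + of_int z"
proof -
  have L: "real_of_int L > 0" and m: "real m ^ J > 0" using L_pos m_ge_2 by simp_all
  define c where "c = (a + b) / 2 - real m ^ J * of_int s / of_int L"
  define \<theta> where "\<theta> = of_int L * frac (c / of_int p) / real m ^ J"
  have "0 \<le> \<theta>" using L m by (simp add: \<theta>_def)
  moreover have "\<theta> < 1"
  proof -
    have "of_int L * frac (c / of_int p) < of_int L" using L frac_lt_1 by simp
    with assms m show ?thesis by (simp add: \<theta>_def)
  qed
  moreover have "real m ^ J * of_int p * \<theta> / of_int L = c - of_int p * of_int \<lfloor>c / of_int p\<rfloor>"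
    using L m p_nonzero by (simp add: \<theta>_def frac_def field_simps)
  then have "real m ^ J * (of_int s + of_int p * \<theta>) / of_int L = (a + b) / 2 + of_int (- p * \<lfloor>c / of_int p\<rfloor>)"
    unfolding c_def by (simp add: add_divide_distrib ring_distribs)
  ultimately show ?thesis by (rule that)
qed

lemma exists_word_forcing_hole: "\<exists>v. set v \<subseteq> {..<m} \<and> forces_hole s v"
proof -
  \<comment> \<open>The first J digits of v steer the point to the centre of the hole, the last K keep the error below \<delta>.\<close>
  have m: "m > 0" "real m > 1" and L: "real_of_int L > 0" using m_ge_2 L_pos by simp_all
  define \<delta> where "\<delta> = (b - a) / 2"
  have \<delta>: "\<delta> > 0" using hole by (simp add: \<delta>_def)
  obtain J where "real_of_int L < real m ^ J" using real_arch_pow[OF m(2)] by blast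
  then obtain \<theta> z where \<theta>: "0 \<le> \<theta>" "\<theta> < 1"
    and centre: "real m ^ J * (of_int s + of_int p * \<theta>) / of_int L = (a + b) / 2 + of_int z"
    by (rule exists_centre_preimage)
  obtain K where K: "\<bar>of_int p\<bar> / (of_int L * \<delta>) < real m ^ K" using real_arch_pow[OF m(2)] by blast
  obtain v where v: "length v = J + K" "set v \<subseteq> {..<m}" "\<theta> \<in> cylinder m v"
    using cylinder_cover[OF m(1) \<theta>] by blast
  define v1 where "v1 = take J v"
  define v2 where "v2 = drop J v"
  have "\<forall>g \<in> cylinder m v2. lands_in_hole (state_after s v1) g"
  proof
    fix g assume g: "g \<in> cylinder m v2"
    define \<psi> where "\<psi> = (of_int (word_value m v1) + g) / real m ^ J"
    have "\<psi> \<in> cylinder m v"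
      using cylinder_append[OF m(1) g, of v1] v(1) by (simp add: \<psi>_def v1_def v2_def)
    then have "\<bar>\<psi> - \<theta>\<bar> \<le> 1 / real m ^ (J + K)"
      using cylinder_diameter v by metis
    define e where "e = real m ^ J * of_int p * (\<psi> - \<theta>) / of_int L"
    have "\<bar>e\<bar> = real m ^ J * \<bar>of_int p\<bar> * \<bar>\<psi> - \<theta>\<bar> / of_int L"
      using L by (simp add: e_def abs_mult)
    also have "\<dots> \<le> real m ^ J * \<bar>of_int p\<bar> * (1 / real m ^ (J + K)) / of_int L"
      using \<open>\<bar>\<psi> - \<theta>\<bar> \<le> _\<close> L by (intro divide_right_mono mult_left_mono) simp_all
    also have "\<dots> = \<bar>of_int p\<bar> / (of_int L * real m ^ K)"
      using m by (simp add: power_add field_simps)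
    also have "\<dots> < \<delta>"
      using K L \<delta> m by (simp add: field_simps)
    finally have "(a + b) / 2 + e \<in> {a<..<b}"
      unfolding \<delta>_def by (simp add: field_simps) (simp add: abs_if split: if_splits)
    moreover have "state_after s v1 = int m ^ J * s + p * word_value m v1"
      using v(1) by (simp add: state_after_def v1_def)
    then have "(of_int (state_after s v1) + of_int p * g) / of_int L
        = real m ^ J * (of_int s + of_int p * \<theta>) / of_int L + e"
      using L m by (simp add: \<psi>_def e_def field_simps)
    then have "(of_int (state_after s v1) + of_int p * g) / of_int L = (a + b) / 2 + e + of_int z"
      unfolding centre by simp
    ultimately show "lands_in_hole (state_after s v1) g"
      using hole unfolding lands_in_hole_def by (simp add: frac_eq)
  qed
  then have "forces_hole s v"
    unfolding forces_hole_def by (intro exI[of _ v1] exI[of _ v2] exI[of _ "[]"]) (simp add: v1_def v2_def)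
  with v show ?thesis by blast
qed

lemma exists_word_forcing_hole_everywhere:
  assumes "finite S"
  shows "\<exists>W. W \<noteq> [] \<and> set W \<subseteq> {..<m} \<and> (\<forall>s \<in> S. forces_hole s W)"
  using assms
proof (induction S rule: finite_induct)
  case empty
  show ?case using m_ge_2 by (intro exI[of _ "[0]"]) auto
next
  case (insert s S)
  then obtain W where W: "W \<noteq> []" "set W \<subseteq> {..<m}" "\<forall>s \<in> S. forces_hole s W" by blast
  obtain v where v: "set v \<subseteq> {..<m}" "forces_hole (state_after s W) v" using exists_word_forcing_hole by blast
  show ?case
    using W v forces_hole_append forces_hole_prepend by (intro exI[of _ "W @ v"]) auto
qed

lemma orbit_enters_hole:
  assumes "is_m_adic_expansion m d u" and "universal_expansion m d"
  shows "\<exists>n. frac (real m ^ n * ((of_int p * u + of_int c) / of_int L)) \<in> {a<..<b}"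
proof -
  obtain W where W: "W \<noteq> []" "set W \<subseteq> {..<m}" "\<forall>s \<in> {0..<L}. forces_hole s W"
    using exists_word_forcing_hole_everywhere[of "{0..<L}"] by auto
  then obtain k where k: "\<forall>i < length W. d (k + i) = W ! i"
    using assms(2) unfolding universal_expansion_def by blast
  define S where "S = p * word_value m (map d [0..<k]) + int m ^ k * c"
  have "forces_hole S W" using W(3) L_pos forces_hole_mod by simp
  then obtain w1 w2 w3 where w: "W = w1 @ w2 @ w3" and forced: "\<forall>g \<in> cylinder m w2. lands_in_hole (state_after S w1) g"
    unfolding forces_hole_def by blast
  define n where "n = k + length w1"
  have "map d [k..<n] = w1"
    using k unfolding w n_def by (intro nth_equalityI) (auto simp: nth_append)
  then have prefix: "map d [0..<n] = map d [0..<k] @ w1"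
    unfolding n_def by (simp only: upt_add_eq_append[OF le0] map_append)
  have "map d [n..<n + length w2] = w2"
  proof (rule nth_equalityI)
    fix i assume "i < length (map d [n..<n + length w2])"
    then have "d (k + (length w1 + i)) = W ! (length w1 + i)" using k w by simp
    then show "map d [n..<n + length w2] ! i = w2 ! i"
      using \<open>i < _\<close> by (simp add: w nth_append n_def add.assoc)
  qed simp
  then have "lands_in_hole (state_after S w1) (expansion_tail m d u n)"
    using forced expansion_tail_in_cylinder[OF m_ge_2 assms(1), of n "length w2"] by simp
  moreover have "(of_int (state_after S w1) + of_int p * expansion_tail m d u n) / of_int L
      = real m ^ n * ((of_int p * u + of_int c) / of_int L)"
  proof -
    have "state_after S w1 = p * word_value m (map d [0..<n]) + int m ^ n * c"
      unfolding prefix by (simp add: state_after_def S_def word_value_append n_def power_add algebra_simps)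
    then show ?thesis
      by (simp add: expansion_tail_def add_divide_distrib algebra_simps)
  qed
  ultimately show ?thesis
    unfolding lands_in_hole_def by auto
qed

end

lemma times_m_mod1_iterate:
  assumes "0 \<le> x" and "x < 1"
  shows "(times_m_mod1 m ^^ n) x = frac (real m ^ n * x)"
proof (induction n)
  case 0
  then show ?case using assms by (simp add: frac_eq)
next
  case (Suc n)
  have "frac (real m * frac y) = frac (real m * y)" for y
    using frac_add_of_int_right[of "real m * y" "- (int m * \<lfloor>y\<rfloor>)"]
    by (simp add: frac_def algebra_simps)
  with Suc show ?case by (simp add: times_m_mod1_def mult.assoc)
qed

lemma rational_affine_image_not_survivor:
  assumes "m \<ge> 2" and "0 \<le> a" "a < b" "b \<le> 1"
    and "has_universal_expansion m u" and "r \<in> \<rat>" "r \<noteq> 0" "q \<in> \<rat>"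
  shows "r * u + q \<notin> survivor_set m a b"
proof
  assume x: "r * u + q \<in> survivor_set m a b"
  obtain d where d: "is_m_adic_expansion m d u" "universal_expansion m d"
    using assms(5) unfolding has_universal_expansion_def by blast
  obtain p1 L1 :: int where L1: "L1 > 0" "r = of_int p1 / of_int L1"
    using Rats_cases'[OF assms(6)] by metis
  obtain c2 L2 :: int where L2: "L2 > 0" "q = of_int c2 / of_int L2"
    using Rats_cases'[OF assms(8)] by metis
  interpret rational_hole_dynamics m "p1 * L2" "L1 * L2" a b
    using assms(1-4,7) L1 L2 by unfold_locales auto
  have "r * u + q = (of_int (p1 * L2) * u + of_int (c2 * L1)) / of_int (L1 * L2)"
    using L1 L2 by (simp add: field_simps)
  then obtain n where "frac (real m ^ n * (r * u + q)) \<in> {a<..<b}"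
    using orbit_enters_hole[OF d] by metis
  moreover have "(times_m_mod1 m ^^ n) (r * u + q) \<notin> {a<..<b}"
    using x unfolding survivor_set_def by blast
  ultimately show False
    using x times_m_mod1_iterate unfolding survivor_set_def by auto
qed

theorem corollary2:
  fixes m :: nat and a b :: real
  assumes "m \<ge> 2" and "0 \<le> a" and "a < b" and "b \<le> 1"
  shows "(\<forall>t. 0 < t \<and> t < 1 \<and> has_universal_expansion m t \<longrightarrow>
            (\<lambda>x. x - t) ` survivor_set m a b \<subseteq> - \<rat> \<and>
            (\<lambda>x. x + t) ` survivor_set m a b \<subseteq> - \<rat> \<and>
            (\<lambda>x. x / t) ` (survivor_set m a b - {0}) \<subseteq> - \<rat>)
       \<and> (\<forall>t. 1 < t \<and> has_universal_expansion m (1 / t) \<longrightarrow>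
            (\<lambda>x. t * x) ` (survivor_set m a b - {0}) \<subseteq> - \<rat>)"
proof (intro conjI allI impI subsetI)
  fix t y assume t: "0 < t \<and> t < 1 \<and> has_universal_expansion m t"
  {
    assume "y \<in> (\<lambda>x. x - t) ` survivor_set m a b"
    then show "y \<in> - \<rat>"
      using t rational_affine_image_not_survivor[OF assms, of t 1 y] by auto
  next
    assume "y \<in> (\<lambda>x. x + t) ` survivor_set m a b"
    then show "y \<in> - \<rat>"
      using t rational_affine_image_not_survivor[OF assms, of t "- 1" y] by auto
  next
    assume "y \<in> (\<lambda>x. x / t) ` (survivor_set m a b - {0})"
    then show "y \<in> - \<rat>"
      using t rational_affine_image_not_survivor[OF assms, of t y 0] by auto
  }
next
  fix t y assume t: "1 < t \<and> has_universal_expansion m (1 / t)"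
    and "y \<in> (\<lambda>x. t * x) ` (survivor_set m a b - {0})"
  then show "y \<in> - \<rat>"
    using rational_affine_image_not_survivor[OF assms, of "1 / t" y 0] by auto
qed

end
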